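(* Let $F$ be an infinite field, $n=3$, and let $f,g\in\mathcal{B}_{(1,1)}$ with $f\le_{\mathcal{B}_{(1,1)}}g$. Then $g\in\langle\{f\}\cup I\rangle_{T_{\mathbb{Z}_3}}$.
   Context: $I$ is the $T_{\mathbb{Z}_3}$-ideal of graded identities of $UT_3(F)^{(-)}$ ($3\times3$ upper triangular matrices, bracket $[a,b]=ab-ba$, canonical grading with degree-$k$ component spanned by $e_{ij}$, $j-i=k$) in the free Lie algebra on variables $y_i$ (degree $0$), $z_i$ (degree $1$), $w_i$ (degree $2$). Commutators are left normed. $z_1,z_2$ are fixed distinct variables of degree $1$. $[z_1,a_1y_1,\dots,a_ny_n,z_2,b_1y_1,\dots,b_ny_n]$ denotes the commutator with $z_1$, then $y_1$ repeated $a_1$ times, …, $y_n$ repeated $a_n$ times, then $z_2$, then $y_1$ repeated $b_1$ times, …, $y_n$ repeated $b_n$ times. $\mathcal{B}_{(1,1)}$ is the set of all such commutators with $n\ge0$, $a_i,b_i\ge0$. For such $f$, $V_f=((a_1,b_1),\dots,(a_n,b_n))$. For $f,g\in\mathcal{B}_{(1,1)}$ with $V_f=((a_1,b_1),\dots,(a_n,b_n))$, $V_g=((a'_1,b'_1),\dots,(a'_m,b'_m))$, $f\le_{\mathcal{B}_{(1,1)}}g$ means there is a strictly increasing $\varphi:\{1,\dots,n\}\to\{1,\dots,m\}$ with $a_i\le a'_{\varphi(i)}$ and $b_i\le b'_{\varphi(i)}$ for all $i$. *)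

theory Defs
  imports Main
begin

datatype var = Y nat | Z nat | W nat

fun vdeg :: "var \<Rightarrow> nat" where
  "vdeg (Y _) = 0" | "vdeg (Z _) = 1" | "vdeg (W _) = 2"

definition wdeg :: "var list \<Rightarrow> nat" where
  "wdeg u = (sum_list (map vdeg u)) mod 3"

text \<open>Noncommutative polynomials: coefficient functions on words (finite support
  is automatic for the elements we generate).\<close>
type_synonym 'a npoly = "var list \<Rightarrow> 'a"

definition pvar :: "var \<Rightarrow> 'a::field npoly" where
  "pvar x = (\<lambda>w. if w = [x] then 1 else 0)"

definition pone :: "'a::field npoly" where
  "pone = (\<lambda>w. if w = [] then 1 else 0)"

definition pzero :: "'a::field npoly" where
  "pzero = (\<lambda>w. 0)"

definition padd :: "'a::field npoly \<Rightarrow> 'a npoly \<Rightarrow> 'a npoly" where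
  "padd p q = (\<lambda>w. p w + q w)"

definition psmult :: "'a::field \<Rightarrow> 'a npoly \<Rightarrow> 'a npoly" where
  "psmult c p = (\<lambda>w. c * p w)"

definition pmult :: "'a::field npoly \<Rightarrow> 'a npoly \<Rightarrow> 'a npoly" where
  "pmult p q = (\<lambda>w. \<Sum>k\<le>length w. p (take k w) * q (drop k w))"

definition pbr :: "'a::field npoly \<Rightarrow> 'a npoly \<Rightarrow> 'a npoly" where
  "pbr p q = (\<lambda>w. pmult p q w - pmult q p w)"

text \<open>The free Lie algebra L(X): the Lie subalgebra of F<X> generated by the variables.\<close>
inductive_set lie_polys :: "'a::field npoly set" where
  lp_var: "pvar x \<in> lie_polys"
| lp_zero: "pzero \<in> lie_polys"
| lp_add: "p \<in> lie_polys \<Longrightarrow> q \<in> lie_polys \<Longrightarrow> padd p q \<in> lie_polys"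
| lp_smult: "p \<in> lie_polys \<Longrightarrow> psmult c p \<in> lie_polys"
| lp_br: "p \<in> lie_polys \<Longrightarrow> q \<in> lie_polys \<Longrightarrow> pbr p q \<in> lie_polys"

definition homog :: "nat \<Rightarrow> 'a::field npoly \<Rightarrow> bool" where
  "homog d p \<longleftrightarrow> (\<forall>u. p u \<noteq> 0 \<longrightarrow> wdeg u = d)"

definition wprod :: "(var \<Rightarrow> 'a::field npoly) \<Rightarrow> var list \<Rightarrow> 'a npoly" where
  "wprod \<sigma> u = foldr (\<lambda>x acc. pmult (\<sigma> x) acc) u pone"

definition psubst :: "(var \<Rightarrow> 'a::field npoly) \<Rightarrow> 'a npoly \<Rightarrow> 'a npoly" where
  "psubst \<sigma> p = (\<lambda>w. \<Sum>u | p u \<noteq> 0. p u * wprod \<sigma> u w)"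

definition graded_endo :: "(var \<Rightarrow> 'a::field npoly) \<Rightarrow> bool" where
  "graded_endo \<sigma> \<longleftrightarrow> (\<forall>x. \<sigma> x \<in> lie_polys \<and> homog (vdeg x) (\<sigma> x))"

inductive_set tideal :: "'a::field npoly set \<Rightarrow> 'a npoly set" for S where
  ti_gen: "s \<in> S \<Longrightarrow> s \<in> tideal S"
| ti_zero: "pzero \<in> tideal S"
| ti_add: "p \<in> tideal S \<Longrightarrow> q \<in> tideal S \<Longrightarrow> padd p q \<in> tideal S"
| ti_smult: "p \<in> tideal S \<Longrightarrow> psmult c p \<in> tideal S"
| ti_br: "p \<in> tideal S \<Longrightarrow> q \<in> lie_polys \<Longrightarrow> pbr p q \<in> tideal S"
| ti_subst: "p \<in> tideal S \<Longrightarrow> graded_endo \<sigma> \<Longrightarrow> psubst \<sigma> p \<in> tideal S"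

text \<open>3x3 matrices as functions on indices 0,1,2.\<close>
type_synonym 'a mat3 = "nat \<Rightarrow> nat \<Rightarrow> 'a"

definition mmult :: "'a::field mat3 \<Rightarrow> 'a mat3 \<Rightarrow> 'a mat3" where
  "mmult A B = (\<lambda>i j. \<Sum>k<3. A i k * B k j)"

definition mone :: "'a::field mat3" where
  "mone = (\<lambda>i j. if i = j \<and> i < 3 then 1 else 0)"

definition ut3_comp :: "nat \<Rightarrow> 'a::field mat3 \<Rightarrow> bool" where
  "ut3_comp d A \<longleftrightarrow> (\<forall>i j. A i j \<noteq> 0 \<longrightarrow> i < 3 \<and> j < 3 \<and> j = i + d)"

definition graded_eval :: "(var \<Rightarrow> 'a::field mat3) \<Rightarrow> bool" where
  "graded_eval \<rho> \<longleftrightarrow> (\<forall>x. ut3_comp (vdeg x) (\<rho> x))"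

text \<open>Evaluation; for Lie polynomials this is the Lie evaluation in UT_3^(-).\<close>
definition peval :: "(var \<Rightarrow> 'a::field mat3) \<Rightarrow> 'a npoly \<Rightarrow> 'a mat3" where
  "peval \<rho> p = (\<lambda>i j. \<Sum>u | p u \<noteq> 0.
      p u * (foldr (\<lambda>x acc. mmult (\<rho> x) acc) u mone) i j)"

definition ut3_ids :: "'a::field npoly set" where
  "ut3_ids = {p \<in> lie_polys. \<forall>\<rho>. graded_eval \<rho> \<longrightarrow> peval \<rho> p = (\<lambda>i j. 0)}"

fun lnorm :: "'a::field npoly \<Rightarrow> var list \<Rightarrow> 'a npoly" where
  "lnorm p [] = p"
| "lnorm p (x # xs) = lnorm (pbr p (pvar x)) xs"

text \<open>For V = ((a_1,b_1),...,(a_n,b_n)) (list index i corresponds to y_(i+1)):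
  [z1, a_1 y_1, ..., a_n y_n, z2, b_1 y_1, ..., b_n y_n].\<close>
definition ys_block :: "nat list \<Rightarrow> var list" where
  "ys_block as = concat (map (\<lambda>i. replicate (as ! i) (Y (Suc i))) [0..<length as])"

definition bcomm :: "var \<Rightarrow> var \<Rightarrow> (nat \<times> nat) list \<Rightarrow> 'a::field npoly" where
  "bcomm z1 z2 V = lnorm (pvar z1) (ys_block (map fst V) @ [z2] @ ys_block (map snd V))"

definition ble :: "(nat \<times> nat) list \<Rightarrow> (nat \<times> nat) list \<Rightarrow> bool" where
  "ble V V' \<longleftrightarrow> (\<exists>\<phi>. strict_mono_on {..<length V} \<phi> \<and>
      (\<forall>i<length V. \<phi> i < length V' \<and>
         fst (V ! i) \<le> fst (V' ! \<phi> i) \<and> snd (V ! i) \<le> snd (V' ! \<phi> i)))"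

end

theory Submission
  imports Defs "HOL-Library.Multiset"
begin

text \<open>The diagonal of \<open>UT\<^sub>3\<close> is commutative, so \<open>[y, y']\<close> is a graded identity, and by the
  Jacobi identity the degree-0 variables following a Lie polynomial in a left-normed commutator
  may be permuted freely modulo the T-ideal. If \<open>\<phi>\<close> witnesses \<open>f \<le> g\<close>, let \<open>D\<close> and \<open>E\<close> list the
  \<open>y\<close>'s of the first and second block of \<open>g\<close> not accounted for by \<open>\<phi>\<close>. The graded substitution
  \<open>z\<^sub>1 \<mapsto> [z\<^sub>1, D]\<close>, \<open>y\<^sub>i \<mapsto> y\<^sub>\<phi>\<^sub>(\<^sub>i\<^sub>)\<close>, followed by bracketing with \<open>E\<close>, sends \<open>f\<close> to a commutator
  whose two \<open>y\<close>-blocks are rearrangements of those of \<open>g\<close>.\<close>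

definition psub :: "'a::field npoly \<Rightarrow> 'a npoly \<Rightarrow> 'a npoly" where
  "psub p q = (\<lambda>w. p w - q w)"

definition pmono :: "var list \<Rightarrow> 'a::field npoly" where
  "pmono u = (\<lambda>w. if w = u then 1 else 0)"

lemma pvar_eq_pmono: "pvar x = pmono [x]"
  by (simp add: pvar_def pmono_def)

lemma pmult_Nil: "pmult p q [] = p [] * q []"
  by (simp add: pmult_def)

lemma pmult_Cons: "pmult p q (x # w) = p [] * q (x # w) + pmult (\<lambda>u. p (x # u)) q w"
  unfolding pmult_def length_Cons sum.atMost_Suc_shift by simp

lemma pmult_add_left: "pmult (\<lambda>u. f u + g u) r w = pmult f r w + pmult g r w"
  by (simp add: pmult_def sum.distrib algebra_simps)

lemma pmult_smult_left: "pmult (\<lambda>u. c * f u) r w = c * pmult f r w"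
  by (simp add: pmult_def sum_distrib_left algebra_simps)

lemma pmult_diff_left: "pmult (\<lambda>u. f u - g u) r w = pmult f r w - pmult g r w"
  by (simp add: pmult_def sum_subtractf algebra_simps)

lemma pmult_diff_right: "pmult r (\<lambda>u. f u - g u) w = pmult r f w - pmult r g w"
  by (simp add: pmult_def sum_subtractf algebra_simps)

lemma pmult_sum_left:
  "pmult (\<lambda>w. \<Sum>i\<in>I. c i * f i w) r w = (\<Sum>i\<in>I. c i * pmult (f i) r w)"
  unfolding pmult_def
  by (simp add: sum_distrib_left sum_distrib_right mult.assoc sum.swap[of _ I])

lemma pmult_sum_right:
  "pmult r (\<lambda>w. \<Sum>i\<in>I. c i * f i w) w = (\<Sum>i\<in>I. c i * pmult r (f i) w)"
  unfolding pmult_def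
  by (simp add: sum_distrib_left sum_distrib_right mult.left_commute sum.swap[of _ I])

lemma pmult_assoc: "pmult (pmult p q) r = pmult p (pmult q r)"
proof
  fix w show "pmult (pmult p q) r w = pmult p (pmult q r) w"
  proof (induction w arbitrary: p q)
    case Nil then show ?case by (simp add: pmult_Nil)
  next
    case (Cons x w)
    have shift: "(\<lambda>u. pmult p q (x # u)) = (\<lambda>u. p [] * q (x # u) + pmult (\<lambda>u. p (x # u)) q u)"
      by (simp add: pmult_Cons)
    have "pmult (pmult p q) r (x # w) = p [] * q [] * r (x # w)
        + (p [] * pmult (\<lambda>u. q (x # u)) r w + pmult (pmult (\<lambda>u. p (x # u)) q) r w)"
      by (simp add: pmult_Cons shift pmult_add_left pmult_smult_left pmult_Nil)
    also have "\<dots> = pmult p (pmult q r) (x # w)"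
      by (simp add: pmult_Cons pmult_Nil Cons algebra_simps)
    finally show ?case .
  qed
qed

lemma pmult_pone_left: "pmult pone q = q"
proof
  fix w show "pmult pone q w = q w"
  proof (cases w)
    case Nil then show ?thesis by (simp add: pmult_Nil pone_def)
  next
    case (Cons x w')
    have "pmult (\<lambda>u. pone (x # u)) q w' = 0" by (simp add: pmult_def pone_def)
    then show ?thesis using Cons by (simp add: pmult_Cons pone_def)
  qed
qed

lemma pmult_pone_right: "pmult p pone = p"
proof
  fix w
  have "pmult p pone w = (\<Sum>k\<le>length w. if k = length w then p w else 0)"
    unfolding pmult_def by (rule sum.cong) (auto simp: pone_def)
  then show "pmult p pone w = p w" by simp
qed

lemma pmult_pmono: "pmult (pmono u) (pmono v) = (pmono (u @ v) :: 'a::field npoly)"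
proof
  fix w
  have "pmono u (take k w) * pmono v (drop k w) = (if k = length u \<and> w = u @ v then 1 else (0::'a))"
    if "k \<le> length w" for k
    using that by (auto simp: pmono_def)
  then have "(pmult (pmono u) (pmono v) w :: 'a)
      = (\<Sum>k\<le>length w. if k = length u \<and> w = u @ v then 1 else 0)"
    unfolding pmult_def by (intro sum.cong) simp_all
  then show "(pmult (pmono u) (pmono v) w :: 'a) = pmono (u @ v) w"
    by (cases "w = u @ v") (simp_all add: pmono_def)
qed

lemma pbr_jacobi: "psub (pbr (pbr P a) b) (pbr (pbr P b) a) = pbr P (pbr a b)"
  unfolding psub_def pbr_def
  by (rule ext) (simp add: pmult_diff_left pmult_diff_right pmult_assoc algebra_simps)

lemma pbr_psub_left: "pbr (psub p q) r = psub (pbr p r) (pbr q r)"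
  unfolding psub_def pbr_def
  by (rule ext) (simp add: pmult_diff_left pmult_diff_right algebra_simps)

lemma lnorm_psub: "lnorm (psub p q) xs = psub (lnorm p xs) (lnorm q xs)"
  by (induction xs arbitrary: p q) (simp_all add: pbr_psub_left)

lemma lnorm_append: "lnorm P (xs @ ys) = lnorm (lnorm P xs) ys"
  by (induction xs arbitrary: P) simp_all

lemma lnorm_in_lie_polys: "P \<in> lie_polys \<Longrightarrow> lnorm P xs \<in> lie_polys"
  by (induction xs arbitrary: P) (simp_all add: lie_polys.lp_br lie_polys.lp_var)

section \<open>Congruence modulo a T-ideal\<close>

lemma tideal_pbr_right: "c \<in> tideal S \<Longrightarrow> P \<in> lie_polys \<Longrightarrow> pbr P c \<in> tideal S"
proof -
  assume "c \<in> tideal S" "P \<in> lie_polys"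
  moreover have "pbr P c = psmult (-1) (pbr c P)" by (simp add: pbr_def psmult_def)
  ultimately show ?thesis by (simp add: tideal.ti_br tideal.ti_smult)
qed

lemma tideal_lnorm: "c \<in> tideal S \<Longrightarrow> lnorm c xs \<in> tideal S"
  by (induction xs arbitrary: c) (simp_all add: tideal.ti_br lie_polys.lp_var)

definition tcong :: "'a::field npoly set \<Rightarrow> 'a npoly \<Rightarrow> 'a npoly \<Rightarrow> bool" where
  "tcong S p q \<longleftrightarrow> psub p q \<in> tideal S"

lemma tcong_refl: "tcong S p p"
proof -
  have "psub p p = pzero" by (simp add: psub_def pzero_def)
  then show ?thesis by (simp add: tcong_def tideal.ti_zero)
qed

lemma tcong_sym: "tcong S p q \<Longrightarrow> tcong S q p"
proof -
  assume "tcong S p q"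
  moreover have "psub q p = psmult (-1) (psub p q)" by (simp add: psub_def psmult_def)
  ultimately show ?thesis by (simp add: tcong_def tideal.ti_smult)
qed

lemma tcong_trans: "tcong S p q \<Longrightarrow> tcong S q r \<Longrightarrow> tcong S p r"
proof -
  assume "tcong S p q" "tcong S q r"
  moreover have "psub p r = padd (psub p q) (psub q r)" by (simp add: psub_def padd_def)
  ultimately show ?thesis by (simp add: tcong_def tideal.ti_add)
qed

lemma tcong_tideal: "tcong S p q \<Longrightarrow> q \<in> tideal S \<Longrightarrow> p \<in> tideal S"
proof -
  assume "tcong S p q" "q \<in> tideal S"
  moreover have "p = padd (psub p q) q" by (simp add: psub_def padd_def)
  ultimately show ?thesis by (metis tcong_def tideal.ti_add)
qed

section \<open>The graded identity \<open>[y, y']\<close> and permuting degree-0 variables\<close>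

lemma mmult_diagonal:
  fixes A B :: "'a::field mat3"
  assumes "ut3_comp 0 A" "ut3_comp 0 B"
  shows "mmult A B = (\<lambda>i j. if i = j \<and> i < 3 then A i i * B i i else 0)"
proof (intro ext)
  fix i j
  have "A i k * B k j = (if k = i then (if i = j \<and> i < 3 then A i i * B i i else 0) else 0)" for k
    using assms unfolding ut3_comp_def by (metis add_0_right mult_eq_0_iff)
  then show "mmult A B i j = (if i = j \<and> i < 3 then A i i * B i i else 0)"
    by (simp add: mmult_def)
qed

lemma mmult_mone_right:
  fixes A :: "'a::field mat3"
  assumes "ut3_comp d A"
  shows "mmult A mone = A"
proof (intro ext)
  fix i j
  have "A i k * mone k j = (if k = j then A i j else 0)" if "k < 3" for k
    using assms that unfolding ut3_comp_def mone_def by auto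
  then show "mmult A mone i j = A i j"
    using assms unfolding mmult_def ut3_comp_def by (cases "j < 3") (auto simp: mone_def)
qed

lemma pbr_deg0_vars_in_ut3_ids:
  assumes "vdeg a = 0" "vdeg b = 0"
  shows "pbr (pvar a) (pvar b) \<in> (ut3_ids :: 'a::field npoly set)"
proof -
  have br: "pbr (pvar a) (pvar b) = (\<lambda>w. pmono [a, b] w - pmono [b, a] w :: 'a)"
    by (simp add: pbr_def pvar_eq_pmono pmult_pmono)
  have "peval \<rho> (pbr (pvar a) (pvar b) :: 'a npoly) = (\<lambda>i j. 0)" if "graded_eval \<rho>" for \<rho>
  proof (cases "a = b")
    case True
    then show ?thesis unfolding br peval_def by simp
  next
    case False
    have supp: "{u. pmono [a, b] u - pmono [b, a] u \<noteq> (0::'a)} = {[a, b], [b, a]}"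
      using False by (auto simp: pmono_def)
    have "ut3_comp 0 (\<rho> a)" "ut3_comp 0 (\<rho> b)"
      using that assms unfolding graded_eval_def by metis+
    then have "mmult (\<rho> a) (mmult (\<rho> b) mone) = mmult (\<rho> b) (mmult (\<rho> a) mone)"
      by (simp add: mmult_mone_right mmult_diagonal) (intro ext, simp add: mult.commute)
    then show ?thesis using False unfolding br peval_def supp
      by (simp add: pmono_def)
  qed
  moreover have "pbr (pvar a) (pvar b) \<in> (lie_polys :: 'a npoly set)"
    by (simp add: lie_polys.lp_br lie_polys.lp_var)
  ultimately show ?thesis by (simp add: ut3_ids_def)
qed

lemma tcong_lnorm_swap:
  assumes "ut3_ids \<subseteq> S" "vdeg a = 0" "vdeg b = 0" "P \<in> lie_polys"
  shows "tcong S (lnorm P (a # b # w)) (lnorm P (b # a # w))"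
proof -
  have "pbr (pvar a) (pvar b) \<in> tideal S"
    using pbr_deg0_vars_in_ut3_ids[OF assms(2,3)] assms(1) by (blast intro: tideal.ti_gen)
  then have "pbr P (pbr (pvar a) (pvar b)) \<in> tideal S"
    using assms(4) by (rule tideal_pbr_right)
  then have "lnorm (psub (pbr (pbr P (pvar a)) (pvar b)) (pbr (pbr P (pvar b)) (pvar a))) w \<in> tideal S"
    by (simp add: pbr_jacobi tideal_lnorm)
  then show ?thesis by (simp add: tcong_def lnorm_psub)
qed

lemma tcong_lnorm_move:
  assumes "ut3_ids \<subseteq> S" "\<forall>x\<in>set u. vdeg x = 0" "vdeg y = 0" "P \<in> lie_polys"
  shows "tcong S (lnorm P (u @ y # w)) (lnorm P (y # u @ w))"
  using assms(2,4)
proof (induction u arbitrary: P)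
  case Nil then show ?case by (simp add: tcong_refl)
next
  case (Cons x u)
  have "pbr P (pvar x) \<in> lie_polys"
    using Cons.prems by (simp add: lie_polys.lp_br lie_polys.lp_var)
  then have "tcong S (lnorm P (x # u @ y # w)) (lnorm P (x # y # u @ w))"
    using Cons by simp
  moreover have "tcong S (lnorm P (x # y # u @ w)) (lnorm P (y # x # u @ w))"
    using tcong_lnorm_swap[OF assms(1)] Cons.prems assms(3) by simp
  ultimately have "tcong S (lnorm P (x # u @ y # w)) (lnorm P (y # x # u @ w))"
    by (rule tcong_trans)
  then show ?case by simp
qed

lemma tcong_lnorm_perm:
  assumes "ut3_ids \<subseteq> S" "\<forall>x\<in>set ys. vdeg x = 0" "mset ys = mset ys'" "P \<in> lie_polys"
  shows "tcong S (lnorm P (ys @ zs)) (lnorm P (ys' @ zs))"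
  using assms(2,3,4)
proof (induction ys arbitrary: ys' P)
  case Nil then show ?case by (simp add: tcong_refl)
next
  case (Cons y ys)
  then have "y \<in> set ys'" by (metis list.set_intros(1) set_mset_mset)
  then obtain u v where ys': "ys' = u @ y # v" by (meson split_list)
  have "set ys' = set (y # ys)" using Cons.prems(2) by (metis set_mset_mset)
  then have deg_u: "\<forall>x\<in>set u. vdeg x = 0" using Cons.prems(1) ys' by auto
  have lie: "pbr P (pvar y) \<in> lie_polys"
    using Cons.prems by (simp add: lie_polys.lp_br lie_polys.lp_var)
  have "mset ys = mset (u @ v)" using Cons.prems(2) ys' by simp
  then have "tcong S (lnorm P (y # ys @ zs)) (lnorm P (y # u @ v @ zs))"
    using Cons.IH[OF _ _ lie, of "u @ v"] Cons.prems(1) by simp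
  moreover have "tcong S (lnorm P (y # u @ v @ zs)) (lnorm P (u @ y # v @ zs))"
    using tcong_lnorm_move[OF assms(1) deg_u _ Cons.prems(3)] Cons.prems(1) by (simp add: tcong_sym)
  ultimately have "tcong S (lnorm P (y # ys @ zs)) (lnorm P (u @ y # v @ zs))"
    by (rule tcong_trans)
  then show ?case using ys' by simp
qed

lemma lnorm_perm_blocks_in_tideal:
  assumes "ut3_ids \<subseteq> S" "P \<in> lie_polys" "lnorm P (xs @ zs @ ys) \<in> tideal S"
    "mset xs = mset xs'" "mset ys = mset ys'" "\<forall>x\<in>set xs \<union> set ys. vdeg x = 0"
  shows "lnorm P (xs' @ zs @ ys') \<in> tideal S"
proof -
  have "tcong S (lnorm P (xs @ zs @ ys')) (lnorm P (xs' @ zs @ ys'))"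
    using tcong_lnorm_perm[OF assms(1) _ assms(4,2)] assms(6) by simp
  moreover have "tcong S (lnorm (lnorm P (xs @ zs)) (ys @ [])) (lnorm (lnorm P (xs @ zs)) (ys' @ []))"
    using tcong_lnorm_perm[OF assms(1) _ assms(5) lnorm_in_lie_polys[OF assms(2)], where zs = "[]"]
      assms(6) by simp
  ultimately have "tcong S (lnorm P (xs' @ zs @ ys')) (lnorm P (xs @ zs @ ys))"
    by (simp add: lnorm_append) (rule tcong_sym, rule tcong_trans)
  then show ?thesis using assms(3) by (rule tcong_tideal)
qed

section \<open>Substitution\<close>

definition finite_supp :: "'a::field npoly \<Rightarrow> bool" where
  "finite_supp p \<longleftrightarrow> finite {u. p u \<noteq> 0}"

lemma finite_supp_pmono: "finite_supp (pmono u)"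
proof -
  have "{w. pmono u w \<noteq> 0} \<subseteq> {u}" by (auto simp: pmono_def)
  then show ?thesis unfolding finite_supp_def by (rule finite_subset) simp
qed

lemma finite_supp_pvar: "finite_supp (pvar x)"
  by (simp add: pvar_eq_pmono finite_supp_pmono)

lemma finite_supp_sum:
  assumes "finite I" "\<forall>i\<in>I. finite_supp (f i)"
  shows "finite_supp (\<lambda>w. \<Sum>i\<in>I. c i * f i w)"
proof -
  have "{u. (\<Sum>i\<in>I. c i * f i u) \<noteq> 0} \<subseteq> (\<Union>i\<in>I. {u. f i u \<noteq> 0})"
    by (auto intro: ccontr simp: sum.neutral)
  moreover have "finite (\<Union>i\<in>I. {u. f i u \<noteq> 0})" using assms by (auto simp: finite_supp_def)
  ultimately show ?thesis unfolding finite_supp_def by (rule finite_subset)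
qed

lemma finite_supp_psub: "finite_supp p \<Longrightarrow> finite_supp q \<Longrightarrow> finite_supp (psub p q)"
  unfolding finite_supp_def psub_def
  by (rule finite_subset[of _ "{u. p u \<noteq> 0} \<union> {u. q u \<noteq> 0}"]) auto

lemma supp_pmult:
  "{w. pmult p q w \<noteq> 0} \<subseteq> (\<lambda>(u, v). u @ v) ` ({u. p u \<noteq> 0} \<times> {u. q u \<noteq> 0})"
proof
  fix w assume "w \<in> {w. pmult p q w \<noteq> 0}"
  then obtain k where "p (take k w) * q (drop k w) \<noteq> 0"
    unfolding pmult_def by (metis (mono_tags, lifting) sum.neutral mem_Collect_eq)
  then show "w \<in> (\<lambda>(u, v). u @ v) ` ({u. p u \<noteq> 0} \<times> {u. q u \<noteq> 0})"
    by (intro image_eqI[of _ _ "(take k w, drop k w)"]) auto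
qed

lemma finite_supp_pmult: "finite_supp p \<Longrightarrow> finite_supp q \<Longrightarrow> finite_supp (pmult p q)"
  unfolding finite_supp_def by (rule finite_subset[OF supp_pmult]) auto

lemma pbr_eq_psub: "pbr p q = psub (pmult p q) (pmult q p)"
  by (simp add: pbr_def psub_def)

lemma finite_supp_pbr: "finite_supp p \<Longrightarrow> finite_supp q \<Longrightarrow> finite_supp (pbr p q)"
  by (simp add: pbr_eq_psub finite_supp_psub finite_supp_pmult)

lemma pmono_expansion:
  assumes "finite S" "{u. p u \<noteq> 0} \<subseteq> S"
  shows "(\<lambda>w. \<Sum>u\<in>S. p u * pmono u w) = p"
proof
  fix w
  have "(\<Sum>u\<in>S. p u * pmono u w) = (\<Sum>u\<in>S. if u = w then p w else 0)"
    by (rule sum.cong) (auto simp: pmono_def)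
  also have "\<dots> = p w" using assms by auto
  finally show "(\<Sum>u\<in>S. p u * pmono u w) = p w" .
qed

lemma psubst_on:
  assumes "finite S" "{u. p u \<noteq> 0} \<subseteq> S"
  shows "psubst \<sigma> p w = (\<Sum>u\<in>S. p u * wprod \<sigma> u w)"
  unfolding psubst_def using assms by (intro sum.mono_neutral_left) auto

lemma psubst_sum:
  assumes "finite I" "\<forall>i\<in>I. finite_supp (f i)"
  shows "psubst \<sigma> (\<lambda>w. \<Sum>i\<in>I. c i * f i w) w = (\<Sum>i\<in>I. c i * psubst \<sigma> (f i) w)"
proof -
  define U where "U = (\<Union>i\<in>I. {u. f i u \<noteq> 0})"
  have fin: "finite U" using assms by (auto simp: U_def finite_supp_def)
  have "{u. (\<Sum>i\<in>I. c i * f i u) \<noteq> 0} \<subseteq> U"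
    unfolding U_def by (auto intro: ccontr simp: sum.neutral)
  then have "psubst \<sigma> (\<lambda>w. \<Sum>i\<in>I. c i * f i w) w = (\<Sum>u\<in>U. (\<Sum>i\<in>I. c i * f i u) * wprod \<sigma> u w)"
    by (rule psubst_on[OF fin])
  also have "\<dots> = (\<Sum>i\<in>I. c i * (\<Sum>u\<in>U. f i u * wprod \<sigma> u w))"
    by (simp add: sum_distrib_left sum_distrib_right mult.assoc sum.swap[of _ I])
  also have "\<dots> = (\<Sum>i\<in>I. c i * psubst \<sigma> (f i) w)"
  proof (intro sum.cong refl)
    fix i assume "i \<in> I"
    then have "{u. f i u \<noteq> 0} \<subseteq> U" by (auto simp: U_def)
    then have "psubst \<sigma> (f i) w = (\<Sum>u\<in>U. f i u * wprod \<sigma> u w)"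
      by (rule psubst_on[OF fin])
    then show "c i * (\<Sum>u\<in>U. f i u * wprod \<sigma> u w) = c i * psubst \<sigma> (f i) w"
      by simp
  qed
  finally show ?thesis .
qed

lemma psubst_pmono: "psubst \<sigma> (pmono u) = wprod \<sigma> u"
proof
  fix w
  have "psubst \<sigma> (pmono u) w = (\<Sum>v\<in>{u}. pmono u v * wprod \<sigma> v w)"
    by (rule psubst_on) (auto simp: pmono_def)
  then show "psubst \<sigma> (pmono u) w = wprod \<sigma> u w" by (simp add: pmono_def)
qed

lemma psubst_pvar: "psubst \<sigma> (pvar x) = \<sigma> x"
  by (simp add: pvar_eq_pmono psubst_pmono wprod_def pmult_pone_right)

lemma wprod_append: "wprod \<sigma> (u @ v) = pmult (wprod \<sigma> u) (wprod \<sigma> v)"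
  by (induction u) (simp_all add: wprod_def pmult_pone_left pmult_assoc)

lemma psubst_pmult:
  assumes "finite_supp p" "finite_supp q"
  shows "psubst \<sigma> (pmult p q) = pmult (psubst \<sigma> p) (psubst \<sigma> q)"
proof
  fix w
  define Sp where "Sp = {u. p u \<noteq> 0}"
  define Sq where "Sq = {u. q u \<noteq> 0}"
  have fin: "finite Sp" "finite Sq" using assms by (auto simp: finite_supp_def Sp_def Sq_def)
  have "pmult p q = pmult (\<lambda>w. \<Sum>u\<in>Sp. p u * pmono u w) (\<lambda>w. \<Sum>v\<in>Sq. q v * pmono v w)"
    using fin by (simp add: pmono_expansion Sp_def Sq_def)
  also have "\<dots> = (\<lambda>w. \<Sum>u\<in>Sp. p u * (\<lambda>w. \<Sum>v\<in>Sq. q v * pmono (u @ v) w) w)"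
    by (intro ext) (simp add: pmult_sum_left pmult_sum_right pmult_pmono)
  finally have "psubst \<sigma> (pmult p q) w
      = (\<Sum>u\<in>Sp. p u * (\<Sum>v\<in>Sq. q v * wprod \<sigma> (u @ v) w))"
    using fin by (simp add: psubst_sum finite_supp_sum finite_supp_pmono psubst_pmono)
  also have "\<dots> = pmult (\<lambda>w. \<Sum>u\<in>Sp. p u * wprod \<sigma> u w) (\<lambda>w. \<Sum>v\<in>Sq. q v * wprod \<sigma> v w) w"
    by (simp add: pmult_sum_left pmult_sum_right wprod_append)
  also have "\<dots> = pmult (psubst \<sigma> p) (psubst \<sigma> q) w"
    by (simp add: psubst_def Sp_def Sq_def)
  finally show "psubst \<sigma> (pmult p q) w = pmult (psubst \<sigma> p) (psubst \<sigma> q) w" .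
qed

lemma psubst_psub:
  assumes "finite_supp p" "finite_supp q"
  shows "psubst \<sigma> (psub p q) = psub (psubst \<sigma> p) (psubst \<sigma> q)"
proof
  fix w
  define U where "U = {u. p u \<noteq> 0} \<union> {u. q u \<noteq> 0}"
  have fin: "finite U" using assms by (simp add: U_def finite_supp_def)
  have "{u. psub p q u \<noteq> 0} \<subseteq> U" by (auto simp: U_def psub_def)
  from psubst_on[OF fin this]
  have "psubst \<sigma> (psub p q) w = (\<Sum>u\<in>U. (p u - q u) * wprod \<sigma> u w)"
    by (simp add: psub_def)
  also have "\<dots> = (\<Sum>u\<in>U. p u * wprod \<sigma> u w) - (\<Sum>u\<in>U. q u * wprod \<sigma> u w)"
    by (simp add: sum_subtractf algebra_simps)
  also have "\<dots> = psub (psubst \<sigma> p) (psubst \<sigma> q) w"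
    using psubst_on[OF fin, of p] psubst_on[OF fin, of q] by (auto simp: U_def psub_def)
  finally show "psubst \<sigma> (psub p q) w = psub (psubst \<sigma> p) (psubst \<sigma> q) w" .
qed

lemma psubst_pbr:
  assumes "finite_supp p" "finite_supp q"
  shows "psubst \<sigma> (pbr p q) = pbr (psubst \<sigma> p) (psubst \<sigma> q)"
  using assms by (simp add: pbr_eq_psub psubst_psub finite_supp_pmult psubst_pmult)

lemma psubst_lnorm:
  assumes "finite_supp p" "\<forall>x\<in>set xs. \<sigma> x = pvar (\<tau> x)"
  shows "psubst \<sigma> (lnorm p xs) = lnorm (psubst \<sigma> p) (map \<tau> xs)"
  using assms
proof (induction xs arbitrary: p)
  case Nil then show ?case by simp
next
  case (Cons x xs)
  have "finite_supp (pbr p (pvar x))" using Cons.prems by (simp add: finite_supp_pbr finite_supp_pvar)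
  then show ?case using Cons by (simp add: psubst_pbr finite_supp_pvar psubst_pvar)
qed

lemma vdeg_less_3: "vdeg x < 3"
  by (cases x) simp_all

lemma wdeg_append: "wdeg (u @ v) = (wdeg u + wdeg v) mod 3"
  by (simp add: wdeg_def mod_add_eq)

lemma homog_pvar: "homog (vdeg x) (pvar x)"
  using vdeg_less_3[of x] by (simp add: homog_def pvar_def wdeg_def)

lemma homog_pmult: "homog d p \<Longrightarrow> homog e q \<Longrightarrow> homog ((d + e) mod 3) (pmult p q)"
  unfolding homog_def using supp_pmult[of p q] by (fastforce simp: wdeg_append)

lemma homog_pbr_deg0:
  assumes "homog d p" "homog 0 q" "d < 3"
  shows "homog d (pbr p q)"
proof -
  have "homog d (pmult p q)" "homog d (pmult q p)"
    using homog_pmult[OF assms(1,2)] homog_pmult[OF assms(2,1)] assms(3) by simp_all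
  then show ?thesis unfolding homog_def pbr_def by (metis diff_self)
qed

lemma homog_lnorm_deg0:
  "homog d P \<Longrightarrow> d < 3 \<Longrightarrow> \<forall>x\<in>set xs. vdeg x = 0 \<Longrightarrow> homog d (lnorm P xs)"
proof (induction xs arbitrary: P)
  case Nil then show ?case by simp
next
  case (Cons x xs)
  then have "homog d (pbr P (pvar x))"
    using homog_pbr_deg0 homog_pvar[of x] by simp
  then show ?case using Cons by simp
qed

lemma lnorm_subst_in_tideal:
  assumes "lnorm (pvar z) ws \<in> tideal S" "z \<notin> set ws"
    "\<And>x. vdeg (\<tau> x) = vdeg x" "\<forall>x\<in>set D. vdeg x = 0"
  shows "lnorm (pvar z) (D @ map \<tau> ws) \<in> tideal S"
proof -
  define \<sigma> where "\<sigma> = (\<lambda>x. if x = z then lnorm (pvar z) D else (pvar (\<tau> x) :: 'a npoly))"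
  have "\<sigma> x \<in> lie_polys \<and> homog (vdeg x) (\<sigma> x)" for x
    using homog_lnorm_deg0[OF homog_pvar[of z] vdeg_less_3 assms(4)] homog_pvar[of "\<tau> x"] assms(3)
    by (auto simp: \<sigma>_def lnorm_in_lie_polys lie_polys.lp_var)
  then have "graded_endo \<sigma>" by (simp add: graded_endo_def)
  then have "psubst \<sigma> (lnorm (pvar z) ws) \<in> tideal S"
    by (rule tideal.ti_subst[OF assms(1)])
  moreover have "psubst \<sigma> (lnorm (pvar z) ws) = lnorm (psubst \<sigma> (pvar z)) (map \<tau> ws)"
    using assms(2) by (intro psubst_lnorm) (auto simp: finite_supp_pvar \<sigma>_def)
  ultimately show ?thesis by (simp add: psubst_pvar \<sigma>_def lnorm_append)
qed

lemma count_replicate_blocks: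
  "count (mset (concat (map (\<lambda>i. replicate (c i) (Y (Suc (\<psi> i)))) [0..<n]))) x
   = (\<Sum>i<n. if x = Y (Suc (\<psi> i)) then c i else 0)"
  by (induction n) simp_all

lemma replicate_blocks_subseteq_ys_block:
  assumes "inj_on \<phi> {..<n}" "\<forall>i<n. \<phi> i < length bs \<and> c i \<le> bs ! \<phi> i"
  shows "mset (concat (map (\<lambda>i. replicate (c i) (Y (Suc (\<phi> i)))) [0..<n])) \<subseteq># mset (ys_block bs)"
  unfolding subseteq_mset_def
proof
  fix x
  have "(\<Sum>i<n. if x = Y (Suc (\<phi> i)) then c i else 0)
      \<le> (\<Sum>i<n. if x = Y (Suc (\<phi> i)) then bs ! \<phi> i else 0)"
    using assms(2) by (intro sum_mono) auto
  also have "\<dots> = (\<Sum>j\<in>\<phi> ` {..<n}. if x = Y (Suc j) then bs ! j else 0)"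
    using sum.reindex[OF assms(1), of "\<lambda>j. if x = Y (Suc j) then bs ! j else 0"] by simp
  also have "\<dots> \<le> (\<Sum>j<length bs. if x = Y (Suc j) then bs ! j else 0)"
    using assms(2) by (intro sum_mono2) auto
  also have "\<dots> = count (mset (ys_block bs)) x"
    using count_replicate_blocks[of "\<lambda>i. bs ! i" "\<lambda>i. i"] by (simp add: ys_block_def)
  finally show "count (mset (concat (map (\<lambda>i. replicate (c i) (Y (Suc (\<phi> i)))) [0..<n]))) x
      \<le> count (mset (ys_block bs)) x"
    by (simp only: count_replicate_blocks)
qed

lemma mset_subseteq_complement:
  assumes "mset xs \<subseteq># mset ys"
  obtains zs where "mset ys = mset xs + mset zs"
proof -
  obtain zs where "mset zs = mset ys - mset xs" using ex_mset by blast
  with assms have "mset ys = mset xs + mset zs" by (simp add: subset_mset.add_diff_inverse)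
  then show ?thesis by (rule that)
qed

lemma ys_block_vdeg: "\<forall>x\<in>set (ys_block as). vdeg x = 0"
  by (auto simp: ys_block_def)

lemma map_ys_block:
  assumes "\<forall>i<length as. \<tau> (Y (Suc i)) = Y (Suc (\<phi> i))"
  shows "map \<tau> (ys_block as) = concat (map (\<lambda>i. replicate (as ! i) (Y (Suc (\<phi> i)))) [0..<length as])"
  unfolding ys_block_def map_concat map_map
proof (rule arg_cong[where f = concat], rule map_cong)
  fix i assume "i \<in> set [0..<length as]"
  then show "(map \<tau> \<circ> (\<lambda>i. replicate (as ! i) (Y (Suc i)))) i = replicate (as ! i) (Y (Suc (\<phi> i)))"
    using assms by simp
qed simp

lemma ble_renaming:
  assumes "ble V V'"
  obtains \<tau> where "\<And>x. vdeg (\<tau> x) = vdeg x" "\<And>k. \<tau> (Z k) = Z k"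
    "mset (map \<tau> (ys_block (map fst V))) \<subseteq># mset (ys_block (map fst V'))"
    "mset (map \<tau> (ys_block (map snd V))) \<subseteq># mset (ys_block (map snd V'))"
proof -
  obtain \<phi> where mono: "strict_mono_on {..<length V} \<phi>" and \<phi>: "\<forall>i<length V. \<phi> i < length V' \<and>
      fst (V ! i) \<le> fst (V' ! \<phi> i) \<and> snd (V ! i) \<le> snd (V' ! \<phi> i)"
    using assms unfolding ble_def by blast
  from mono have inj: "inj_on \<phi> {..<length V}" by (rule strict_mono_on_imp_inj_on)
  define \<tau> where "\<tau> = (\<lambda>x. case x of
      Y k \<Rightarrow> if 0 < k \<and> k \<le> length V then Y (Suc (\<phi> (k - 1))) else Y k | _ \<Rightarrow> x)"
  have "vdeg (\<tau> x) = vdeg x" for x by (cases x) (simp_all add: \<tau>_def)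
  moreover have "\<tau> (Z k) = Z k" for k by (simp add: \<tau>_def)
  moreover have "mset (map \<tau> (ys_block (map f V))) \<subseteq># mset (ys_block (map f V'))"
    if "\<forall>i<length V. f (V ! i) \<le> f (V' ! \<phi> i)" for f :: "nat \<times> nat \<Rightarrow> nat"
    using that \<phi> by (subst map_ys_block[where \<phi> = \<phi>])
      (auto simp: \<tau>_def intro!: replicate_blocks_subseteq_ys_block[OF inj])
  ultimately show ?thesis using that \<phi> by blast
qed

theorem mainTheorem7:
  fixes z1 z2 :: var and V V' :: "(nat \<times> nat) list"
  assumes "infinite (UNIV :: 'a::field set)"
    and "vdeg z1 = 1" and "vdeg z2 = 1" and "z1 \<noteq> z2"
    and "ble V V'"
  shows "(bcomm z1 z2 V' :: 'a npoly) \<in> tideal ({bcomm z1 z2 V} \<union> ut3_ids)"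
proof -
  define S where "S = ({bcomm z1 z2 V} \<union> ut3_ids :: 'a npoly set)"
  then have ids: "ut3_ids \<subseteq> S" by blast
  define A where "A = ys_block (map fst V)"
  define B where "B = ys_block (map snd V)"
  obtain \<tau> where deg_\<tau>: "\<And>x. vdeg (\<tau> x) = vdeg x" and fix_Z: "\<And>k. \<tau> (Z k) = Z k"
    and subA: "mset (map \<tau> A) \<subseteq># mset (ys_block (map fst V'))"
    and subB: "mset (map \<tau> B) \<subseteq># mset (ys_block (map snd V'))"
    using ble_renaming[OF assms(5)] unfolding A_def B_def by blast
  obtain D where D: "mset (ys_block (map fst V')) = mset (D @ map \<tau> A)"
    using mset_subseteq_complement[OF subA] by (metis add.commute mset_append)
  obtain E where E: "mset (ys_block (map snd V')) = mset (map \<tau> B @ E)"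
    using mset_subseteq_complement[OF subB] by (metis mset_append)
  have "\<tau> z2 = z2" using assms(3) fix_Z by (cases z2) auto
  moreover have "z1 \<notin> set (A @ [z2] @ B)" using assms(2,4) ys_block_vdeg by (auto simp: A_def B_def)
  moreover have "\<forall>x\<in>set D. vdeg x = 0" using mset_eq_setD[OF D] ys_block_vdeg by auto
  ultimately have "lnorm (pvar z1) (D @ map \<tau> A @ [z2] @ map \<tau> B) \<in> tideal S"
    using lnorm_subst_in_tideal[OF _ _ deg_\<tau>, of z1 "A @ [z2] @ B" S D]
    by (simp add: S_def bcomm_def A_def B_def tideal.ti_gen)
  then have "lnorm (pvar z1) ((D @ map \<tau> A) @ [z2] @ (map \<tau> B @ E)) \<in> tideal S"
    using tideal_lnorm[of _ S E] by (simp add: lnorm_append)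
  moreover have "\<forall>x\<in>set (D @ map \<tau> A) \<union> set (map \<tau> B @ E). vdeg x = 0"
    using ys_block_vdeg unfolding mset_eq_setD[OF D, symmetric] mset_eq_setD[OF E, symmetric]
    by blast
  ultimately have "lnorm (pvar z1) (ys_block (map fst V') @ [z2] @ ys_block (map snd V')) \<in> tideal S"
    by (rule lnorm_perm_blocks_in_tideal[OF ids lie_polys.lp_var _ D[symmetric] E[symmetric]])
  then show ?thesis by (simp add: bcomm_def S_def)
qed

end
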